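(* For $k\in\mathbb N$ let $\mathcal H_k(e^q,J^-)=\frac1k\operatorname{tr}((J^-)^k)$ on $\mathfrak M_{0,-}^{\mathrm{reg}}$ (the restriction of $h_k=\frac1k\Re\operatorname{tr}(J^k)$). Then for every $\mathcal F\in C^\infty(\mathfrak M_{0,-}^{\mathrm{reg}})^{\mathbb T^n}$ and $k\in\mathbb N$, $$\{\mathcal F,\mathcal H_k\}_{2,-}^{\mathrm{red}}=\{\mathcal F,\mathcal H_{k+1}\}_{1,-}^{\mathrm{red}}=\langle\nabla_1\mathcal F,\mathcal V_k[q]\rangle+\langle d_2\mathcal F,\mathcal V_k[J^-]\rangle,$$ where $\mathcal V_k[q]\in\mathcal G_0^-$ has diagonal entries $((J^-)^k)_{jj}$ and $\mathcal V_k[J^-]=[R(q)(J^-)^k,J^-]$. Moreover, if one parametrizes $J^-$ as $(J^-)_{ij}=p_i\delta_{ij}-(1-\delta_{ij})\frac{\xi_{ij}}{\sinh(q_i-q_j)}$ with $p_i\in\mathbb R$ and $\xi$ an anti-Hermitian matrix with zero diagonal, then $$\mathcal H_2=\frac12\sum_{i=1}^np_i^2+\sum_{1\le i<j\le n}\frac{|\xi_{ij}|^2}{\sinh^2(q_i-q_j)},$$ and the functions $\tilde h_k=\frac1k\Im\operatorname{tr}(J^k)$ vanish identically on $\mathfrak M_{0,-}^{\mathrm{reg}}$.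
   Context: $\mathcal G=\mathfrak{gl}(n,\mathbb C)$ (real Lie algebra) with $\langle X,Y\rangle=\Re\operatorname{tr}(XY)$; $\mathcal G^+=\mathfrak u(n)$ (anti-Hermitian), $\mathcal G^-=\mathrm i\,\mathfrak u(n)$ (Hermitian), $X^\pm=\frac12(X\mp X^* )$, $\mathcal G^\pm_0$ the diagonal matrices in $\mathcal G^\pm$. $\mathfrak M_{0,-}^{\mathrm{reg}}=\{(e^q,J^-): J^-\in\mathcal G^-,\ q=\mathrm{diag}(q_1,\dots,q_n),\ q_i\in\mathbb R,\ q_1>\dots>q_n\}$, with the diagonal unitary torus $\mathbb T^n$ acting by $J^-\mapsto\tau J^-\tau^{-1}$. For $\mathcal F\in C^\infty(\mathfrak M_{0,-}^{\mathrm{reg}})$: $\nabla_1\mathcal F\in\mathcal G_0^-$ with $\langle\nabla_1\mathcal F,X_0\rangle=\frac{d}{dt}|_0\mathcal F(e^{q+tX_0},J^-)$ ($X_0\in\mathcal G_0^-$), $d_2\mathcal F\in\mathcal G^-$ with $\langle d_2\mathcal F,X\rangle=\frac{d}{dt}|_0\mathcal F(e^q,J^-+tX)$ ($X\in\mathcal G^-$), $\nabla_2\mathcal F=J^-d_2\mathcal F$. $R(q)\in\mathrm{End}(\mathcal G)$: $(R(q)X)_{ii}=0$, $(R(q)X)_{ij}=X_{ij}\coth(q_i-q_j)$ for $i\ne j$. The Poisson brackets on $C^\infty(\mathfrak M_{0,-}^{\mathrm{reg}})^{\mathbb T^n}$ are $\{\mathcal F,\mathcal H\}_{1,-}^{\mathrm{red}}=\langle\nabla_1\mathcal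 F,d_2\mathcal H\rangle-\langle\nabla_1\mathcal H,d_2\mathcal F\rangle+\langle J^-,[R(q)d_2\mathcal F,d_2\mathcal H]+[d_2\mathcal F,R(q)d_2\mathcal H]\rangle$ and $\{\mathcal F,\mathcal H\}_{2,-}^{\mathrm{red}}=\langle\nabla_1\mathcal F,\nabla_2\mathcal H\rangle-\langle\nabla_1\mathcal H,\nabla_2\mathcal F\rangle+2\langle\nabla_2\mathcal F,R(q)\nabla_2\mathcal H\rangle$ (derivatives at $(e^q,J^-)$). *)

theory Defs
  imports "HOL-Analysis.Analysis"
begin

text \<open>Matrices in gl(n,C) are modelled as complex^'n^'n with a finite, linearly ordered
  index type 'n (the ordering is used only for the chamber q_1 > ... > q_n).\<close>

type_synonym 'n cmat = "complex^('n::finite)^'n"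

primrec mpow :: "'a::comm_ring_1^'n^'n \<Rightarrow> nat \<Rightarrow> 'a^'n^'n" where
  "mpow A 0 = mat 1"
| "mpow A (Suc k) = A ** mpow A k"

definition cadj :: "('n::finite) cmat \<Rightarrow> 'n cmat" where
  "cadj A = (\<chi> i j. cnj (A $ j $ i))"

definition hermitian :: "('n::finite) cmat \<Rightarrow> bool" where
  "hermitian A \<longleftrightarrow> cadj A = A"

definition antihermitian :: "('n::finite) cmat \<Rightarrow> bool" where
  "antihermitian A \<longleftrightarrow> cadj A = - A"

definition ip :: "('n::finite) cmat \<Rightarrow> 'n cmat \<Rightarrow> real" where
  "ip X Y = Re (trace (X ** Y))"

definition comm :: "('n::finite) cmat \<Rightarrow> 'n cmat \<Rightarrow> 'n cmat" where
  "comm X Y = X ** Y - Y ** X"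

definition rdiag :: "real^('n::finite) \<Rightarrow> ('n::finite) cmat" where
  "rdiag x = (\<chi> i j. if i = j then complex_of_real (x $ i) else 0)"

definition coth :: "real \<Rightarrow> real" where
  "coth x = cosh x / sinh x"

definition Rmat :: "real^('n::finite) \<Rightarrow> ('n::finite) cmat \<Rightarrow> 'n cmat" where
  "Rmat q X = (\<chi> i j. if i = j then 0 else X $ i $ j * complex_of_real (coth (q $ i - q $ j)))"

definition regular :: "real^('n::{finite,linorder}) \<Rightarrow> bool" where
  "regular q \<longleftrightarrow> (\<forall>i j. i < j \<longrightarrow> q $ j < q $ i)"

text \<open>Points (e^q, J^-) of M_{0,-}^reg, parametrized by the vector q.\<close>
definition Mreg :: "((real^('n::{finite,linorder})) \<times> 'n cmat) set" where
  "Mreg = {(q, J). regular q \<and> hermitian J}"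

text \<open>Open ambient set {q regular} x gl(n,C); smooth functions on Mreg are exactly the
  restrictions of smooth functions on this open set (compose with J \<mapsto> (J+J^*)/2).\<close>
definition Mamb :: "((real^('n::{finite,linorder})) \<times> 'n cmat) set" where
  "Mamb = {(q, J). regular q}"

fun Ck_on :: "nat \<Rightarrow> 'a::real_normed_vector set \<Rightarrow> ('a \<Rightarrow> real) \<Rightarrow> bool" where
  "Ck_on 0 S f = continuous_on S f"
| "Ck_on (Suc k) S f = (continuous_on S f \<and> (\<forall>x\<in>S. f differentiable (at x)) \<and>
      (\<forall>v. Ck_on k S (\<lambda>x. frechet_derivative f (at x) v)))"

definition Cinf_on :: "'a::real_normed_vector set \<Rightarrow> ('a \<Rightarrow> real) \<Rightarrow> bool" where
  "Cinf_on S f \<longleftrightarrow> (\<forall>k. Ck_on k S f)"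

definition tor :: "real^('n::finite) \<Rightarrow> ('n::finite) cmat" where
  "tor \<theta> = (\<chi> i j. if i = j then cis (\<theta> $ i) else 0)"

definition torus_invariant :: "(real^('n::{finite,linorder}) \<Rightarrow> 'n cmat \<Rightarrow> real) \<Rightarrow> bool" where
  "torus_invariant F \<longleftrightarrow> (\<forall>q J \<theta>. (q, J) \<in> Mreg \<longrightarrow> F q (tor \<theta> ** J ** tor (- \<theta>)) = F q J)"

definition nabla1 :: "(real^('n::finite) \<Rightarrow> 'n cmat \<Rightarrow> real) \<Rightarrow> real^'n \<Rightarrow> 'n cmat \<Rightarrow> 'n cmat" where
  "nabla1 F q J = (THE G. (\<exists>g. G = rdiag g) \<and>
     (\<forall>x. ((\<lambda>t. F (q + t *\<^sub>R x) J) has_real_derivative ip G (rdiag x)) (at 0)))"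

definition d2 :: "(real^('n::finite) \<Rightarrow> 'n cmat \<Rightarrow> real) \<Rightarrow> real^'n \<Rightarrow> 'n cmat \<Rightarrow> 'n cmat" where
  "d2 F q J = (THE D. hermitian D \<and>
     (\<forall>X. hermitian X \<longrightarrow> ((\<lambda>t. F q (J + t *\<^sub>R X)) has_real_derivative ip D X) (at 0)))"

definition nabla2 :: "(real^('n::finite) \<Rightarrow> 'n cmat \<Rightarrow> real) \<Rightarrow> real^'n \<Rightarrow> 'n cmat \<Rightarrow> 'n cmat" where
  "nabla2 F q J = J ** d2 F q J"

definition br1 :: "(real^('n::finite) \<Rightarrow> 'n cmat \<Rightarrow> real) \<Rightarrow> (real^'n \<Rightarrow> 'n cmat \<Rightarrow> real) \<Rightarrow> real^'n \<Rightarrow> 'n cmat \<Rightarrow> real" where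
  "br1 F H q J = ip (nabla1 F q J) (d2 H q J) - ip (nabla1 H q J) (d2 F q J)
     + ip J (comm (Rmat q (d2 F q J)) (d2 H q J) + comm (d2 F q J) (Rmat q (d2 H q J)))"

definition br2 :: "(real^('n::finite) \<Rightarrow> 'n cmat \<Rightarrow> real) \<Rightarrow> (real^'n \<Rightarrow> 'n cmat \<Rightarrow> real) \<Rightarrow> real^'n \<Rightarrow> 'n cmat \<Rightarrow> real" where
  "br2 F H q J = ip (nabla1 F q J) (nabla2 H q J) - ip (nabla1 H q J) (nabla2 F q J)
     + 2 * ip (nabla2 F q J) (Rmat q (nabla2 H q J))"

text \<open>H_k(e^q,J^-) = (1/k) tr((J^-)^k) (real on Mreg; we take the real part).\<close>
definition Hk :: "nat \<Rightarrow> real^('n::finite) \<Rightarrow> ('n::finite) cmat \<Rightarrow> real" where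
  "Hk k q J = Re (trace (mpow J k)) / real k"

definition Vq :: "nat \<Rightarrow> ('n::finite) cmat \<Rightarrow> 'n cmat" where
  "Vq k J = (\<chi> i j. if i = j then mpow J k $ j $ j else 0)"

definition VJ :: "nat \<Rightarrow> real^('n::finite) \<Rightarrow> ('n::finite) cmat \<Rightarrow> 'n cmat" where
  "VJ k q J = comm (Rmat q (mpow J k)) J"

definition Jpar :: "real^('n::finite) \<Rightarrow> real^'n \<Rightarrow> ('n::finite) cmat \<Rightarrow> 'n cmat" where
  "Jpar q p \<xi> = (\<chi> i j. if i = j then complex_of_real (p $ i)
                   else - \<xi> $ i $ j / complex_of_real (sinh (q $ i - q $ j)))"

end

theory Submission
  imports Defs
begin

text \<open>The gradients of H_(k+1) are nabla_1 H_(k+1) = 0 and d_2 H_(k+1) = J^k, by cyclicity of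
  the trace. Substituted into the two brackets, the term <J, [R(q) d_2F, J^k]> vanishes because J
  commutes with its powers, and cyclicity turns <J, [d_2F, R(q) J^k]> into <d_2F, [R(q) J^k, J]>.
  Since coth is odd, R(q) maps Hermitian matrices to anti-Hermitian ones, and for Hermitian J, D
  and anti-Hermitian S the real pairing <J, [D, S]> equals 2 <JD, S>: this is the R-term of the
  second bracket. The formula for H_2 is a direct expansion of tr(J^2), and tr(J^k) is real
  because J^k is Hermitian.\<close>

lemma mpow_add: "mpow J (a + b) = mpow J a ** mpow J b"
  by (induction a) (simp_all add: matrix_mul_lid matrix_mul_assoc)

lemma mpow_Suc_right: "mpow J (Suc k) = mpow J k ** J"
  using mpow_add[of J k 1] by (simp add: matrix_mul_rid)

lemma mpow_commute: "J ** mpow J k = mpow J k ** J"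
  by (metis mpow.simps(2) mpow_Suc_right)

lemma matrix_diff_ldistrib: "(A::'a::comm_ring_1^'n::finite^'m) ** (B - C) = A ** B - A ** C"
  by (simp add: matrix_matrix_mult_def vec_eq_iff right_diff_distrib sum_subtractf)

lemma matrix_neg_left: "(- (A::'a::comm_ring_1^'n::finite^'m)) ** B = - (A ** B)"
  by (simp add: matrix_matrix_mult_def vec_eq_iff sum_negf)

lemma trace_neg: "trace (- (M::'a::comm_ring_1^'n::finite^'n)) = - trace M"
  by (simp add: trace_def sum_negf)

lemma trace_scaleR: "trace (c *\<^sub>R (M::'n::finite cmat)) = c *\<^sub>R trace M"
  by (simp add: trace_def scaleR_sum_right)

lemma trace_rotate3: "trace ((A::'a::comm_semiring_1^'n::finite^'n) ** B ** C) = trace (B ** C ** A)"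
proof -
  have "trace (A ** B ** C) = trace (A ** (B ** C))" by (simp add: matrix_mul_assoc)
  also have "\<dots> = trace (B ** C ** A)" by (rule trace_mul_sym)
  finally show ?thesis .
qed

lemma cadj_cadj [simp]: "cadj (cadj A) = A"
  by (simp add: cadj_def vec_eq_iff)

lemma cadj_mult: "cadj (A ** B) = cadj B ** cadj A"
  by (simp add: cadj_def matrix_matrix_mult_def vec_eq_iff mult.commute)

lemma cadj_mat1: "cadj (mat 1) = mat 1"
  by (simp add: cadj_def mat_def vec_eq_iff)

lemma cadj_add: "cadj (A + B) = cadj A + cadj B"
  by (simp add: cadj_def vec_eq_iff)

lemma cadj_diff: "cadj (A - B) = cadj A - cadj B"
  by (simp add: cadj_def vec_eq_iff)

lemma cadj_scaleR: "cadj (c *\<^sub>R A) = c *\<^sub>R cadj A"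
  by (simp add: cadj_def vec_eq_iff)

lemma trace_cadj: "trace (cadj A) = cnj (trace A)"
  by (simp add: cadj_def trace_def)

lemma hermitian_entry: "hermitian A \<Longrightarrow> A $ j $ i = cnj (A $ i $ j)"
  unfolding hermitian_def cadj_def vec_eq_iff by (metis vec_lambda_beta)

lemma hermitian_mpow: "hermitian J \<Longrightarrow> hermitian (mpow J k)"
  unfolding hermitian_def by (induction k) (simp_all add: cadj_mat1 cadj_mult mpow_commute)

lemma hermitian_diff: "hermitian A \<Longrightarrow> hermitian B \<Longrightarrow> hermitian (A - B)"
  by (simp add: hermitian_def cadj_diff)

lemma Im_trace_hermitian:
  assumes "hermitian A" shows "Im (trace A) = 0"
proof -
  have "Im (A $ i $ i) = 0" for i
    using hermitian_entry[OF assms, of i i] by (metis cnj.sel(2) equal_neg_zero)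
  then show ?thesis by (simp add: trace_def)
qed

lemma coth_minus: "coth (- x) = - coth x"
  by (simp add: coth_def)

lemma Rmat_antihermitian:
  assumes "hermitian A" shows "antihermitian (Rmat q A)"
proof -
  have "cnj (A $ j $ i) * of_real (coth (q $ j - q $ i)) = - (A $ i $ j * of_real (coth (q $ i - q $ j)))"
    for i j
    using coth_minus[of "q $ i - q $ j"] by (simp add: hermitian_entry[OF assms, of i j])
  then show ?thesis
    by (simp add: antihermitian_def cadj_def Rmat_def vec_eq_iff)
qed

lemma ip_commute: "ip X Y = ip Y X"
  unfolding ip_def by (rule arg_cong[where f=Re, OF trace_mul_sym])

lemma ip_zero_left [simp]: "ip 0 X = 0"
  by (simp add: ip_def trace_def)

lemma ip_add_right: "ip X (Y + Z) = ip X Y + ip X Z"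
  by (simp add: ip_def matrix_add_ldistrib trace_add)

lemma ip_diff_right: "ip X (Y - Z) = ip X Y - ip X Z"
  by (simp add: ip_def matrix_diff_ldistrib trace_sub)

lemma ip_diff_left: "ip (X - Y) Z = ip X Z - ip Y Z"
  using ip_diff_right[of Z X Y] by (simp add: ip_commute[of _ Z])

lemma ip_scaleR_left: "ip (c *\<^sub>R X) Y = c * ip X Y"
  by (simp add: ip_def scalar_matrix_assoc[symmetric] trace_scaleR)

lemma ip_cadj_left: "ip (cadj G) X = G \<bullet> X"
proof -
  have "ip (cadj G) X = (\<Sum>i\<in>UNIV. \<Sum>k\<in>UNIV. Re (cnj (G $ k $ i) * X $ k $ i))"
    by (simp add: ip_def trace_def matrix_matrix_mult_def cadj_def)
  also have "\<dots> = (\<Sum>k\<in>UNIV. \<Sum>i\<in>UNIV. Re (cnj (G $ k $ i) * X $ k $ i))"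
    by (rule sum.swap)
  also have "\<dots> = G \<bullet> X"
    by (simp add: inner_vec_def inner_complex_def)
  finally show ?thesis .
qed

lemma ip_cadj_left_hermitian:
  assumes "hermitian X" shows "ip (cadj G) X = ip G X"
proof -
  have "trace (cadj G ** X) = trace (cadj (X ** G))"
    using assms by (simp add: hermitian_def cadj_mult)
  also have "\<dots> = cnj (trace (G ** X))"
    by (simp add: trace_cadj trace_mul_sym[of X])
  finally show ?thesis by (simp add: ip_def)
qed

lemma hermitian_ip_self_eq_0: "hermitian E \<Longrightarrow> ip E E = 0 \<Longrightarrow> E = 0"
  using ip_cadj_left[of E E] ip_cadj_left_hermitian[of E E] by simp

lemma ip_comm_commuting: "J ** A = A ** J \<Longrightarrow> ip J (comm X A) = 0"
proof -
  assume JA: "J ** A = A ** J"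
  have "trace (J ** (X ** A)) = trace ((J ** X) ** A)"
    by (simp only: matrix_mul_assoc)
  also have "\<dots> = trace (A ** (J ** X))"
    by (rule trace_mul_sym)
  also have "\<dots> = trace (J ** (A ** X))"
    by (simp only: matrix_mul_assoc JA)
  finally show ?thesis
    by (simp add: ip_def comm_def matrix_diff_ldistrib trace_sub)
qed

lemma ip_comm_rotate: "ip J (comm D M) = ip D (comm M J)"
proof -
  have "trace (J ** (D ** M)) = trace (D ** M ** J)"
    by (rule trace_mul_sym)
  moreover have "trace (J ** (M ** D)) = trace (D ** (J ** M))"
    by (simp only: matrix_mul_assoc trace_mul_sym[of _ D])
  ultimately show ?thesis
    by (simp add: ip_def comm_def matrix_diff_ldistrib trace_sub matrix_mul_assoc)
qed

lemma ip_comm_antihermitian: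
  assumes J: "hermitian J" and D: "hermitian D" and S: "antihermitian S"
  shows "ip J (comm D S) = 2 * ip (J ** D) S"
proof -
  have "cadj (J ** D ** S) = - (S ** D ** J)"
    using assms by (simp add: hermitian_def antihermitian_def cadj_mult matrix_mul_assoc matrix_neg_left)
  then have "cnj (trace (J ** D ** S)) = - trace (S ** D ** J)"
    by (simp add: trace_cadj[symmetric] trace_neg)
  also have "trace (S ** D ** J) = trace (J ** S ** D)"
    by (simp only: trace_mul_sym[of "S ** D" J] matrix_mul_assoc)
  finally have "Re (trace (J ** S ** D)) = - Re (trace (J ** D ** S))"
    by (metis cnj.sel(1) minus_minus uminus_complex.sel(1))
  then show ?thesis
    by (simp add: ip_def comm_def matrix_diff_ldistrib trace_sub matrix_mul_assoc)
qed

lemma ip_rdiag: "ip (rdiag g) (rdiag x) = g \<bullet> x"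
  by (simp add: ip_def trace_def matrix_matrix_mult_def rdiag_def inner_vec_def if_distrib cong: if_cong)

lemma trace_rdiag_mult: "trace (rdiag g ** M) = (\<Sum>i\<in>UNIV. of_real (g $ i) * M $ i $ i)"
proof -
  have if_times: "(if P then a else 0) * b = (if P then a * b else 0)" for P and a b :: complex
    by simp
  show ?thesis
    by (simp add: trace_def rdiag_def matrix_matrix_mult_def if_times)
qed

lemma ip_rdiag_Vq: "ip (rdiag g) (mpow J k) = ip (rdiag g) (Vq k J)"
  by (simp add: ip_def trace_rdiag_mult Vq_def)

lemma nabla1_eqI:
  assumes "\<And>x. ((\<lambda>t. F (q + t *\<^sub>R x) J) has_real_derivative g \<bullet> x) (at 0)"
  shows "nabla1 F q J = rdiag g"
  unfolding nabla1_def
proof (rule the_equality)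
  show "(\<exists>g'. rdiag g = rdiag g') \<and>
      (\<forall>x. ((\<lambda>t. F (q + t *\<^sub>R x) J) has_real_derivative ip (rdiag g) (rdiag x)) (at 0))"
    using assms by (auto simp: ip_rdiag)
next
  fix G assume G: "(\<exists>g'. G = rdiag g') \<and>
      (\<forall>x. ((\<lambda>t. F (q + t *\<^sub>R x) J) has_real_derivative ip G (rdiag x)) (at 0))"
  then obtain g' where "G = rdiag g'" by blast
  with G assms have "g' \<bullet> x = g \<bullet> x" for x
    using DERIV_unique ip_rdiag by metis
  then have "g' = g"
    by (metis inner_diff_left inner_eq_zero_iff right_minus_eq)
  with \<open>G = rdiag g'\<close> show "G = rdiag g" by simp
qed

lemma d2_eqI:
  assumes "hermitian D"
    and "\<And>X. hermitian X \<Longrightarrow> ((\<lambda>t. F q (J + t *\<^sub>R X)) has_real_derivative ip D X) (at 0)"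
  shows "d2 F q J = D"
  unfolding d2_def
proof (rule the_equality)
  show "hermitian D \<and> (\<forall>X. hermitian X \<longrightarrow>
      ((\<lambda>t. F q (J + t *\<^sub>R X)) has_real_derivative ip D X) (at 0))"
    using assms by blast
next
  fix D' assume D': "hermitian D' \<and> (\<forall>X. hermitian X \<longrightarrow>
      ((\<lambda>t. F q (J + t *\<^sub>R X)) has_real_derivative ip D' X) (at 0))"
  have "ip D' X = ip D X" if "hermitian X" for X
    using D' assms(2)[OF that] that DERIV_unique by blast
  moreover have E: "hermitian (D' - D)"
    using D' assms(1) hermitian_diff by blast
  ultimately have "ip (D' - D) (D' - D) = 0"
    by (simp add: ip_diff_left)
  then show "D' = D"
    using hermitian_ip_self_eq_0[OF E] by simp
qed

lemma has_real_derivative_along_line: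
  fixes f :: "'a::real_normed_vector \<Rightarrow> real"
  assumes "(f has_derivative f') (at a)"
  shows "((\<lambda>t. f (a + t *\<^sub>R v)) has_real_derivative f' v) (at 0)"
proof -
  have "((\<lambda>t. a + t *\<^sub>R v) has_derivative (\<lambda>t. t *\<^sub>R v)) (at 0)"
    by (auto intro!: derivative_eq_intros)
  then have "((\<lambda>t. f (a + t *\<^sub>R v)) has_derivative (\<lambda>t. f' (t *\<^sub>R v))) (at 0)"
    by (rule has_derivative_compose) (simp add: assms)
  moreover have "(\<lambda>t. f' (t *\<^sub>R v)) = (*) (f' v)"
    using has_derivative_linear[OF assms] by (simp add: fun_eq_iff linear_scale)
  ultimately show ?thesis
    by (simp add: has_field_derivative_def)
qed

lemma partial_derivatives_inner:
  fixes F :: "real^'n::finite \<Rightarrow> 'n cmat \<Rightarrow> real"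
  assumes "(\<lambda>(q, J). F q J) differentiable (at (q, J))"
  obtains g G where
    "\<And>x. ((\<lambda>t. F (q + t *\<^sub>R x) J) has_real_derivative g \<bullet> x) (at 0)"
    "\<And>X. ((\<lambda>t. F q (J + t *\<^sub>R X)) has_real_derivative G \<bullet> X) (at 0)"
proof -
  obtain f' where f': "((\<lambda>(q, J). F q J) has_derivative f') (at (q, J))"
    using assms unfolding differentiable_def by blast
  have "bounded_linear (\<lambda>x. f' (x, 0))" "bounded_linear (\<lambda>X. f' (0, X))"
    using has_derivative_bounded_linear[OF f']
    by (auto intro!: bounded_linear_compose[of f'] bounded_linear_Pair
        bounded_linear_ident bounded_linear_zero)
  then have lin: "linear (\<lambda>x. f' (x, 0))" "linear (\<lambda>X. f' (0, X))"
    by (auto dest: bounded_linear.linear)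
  have "((\<lambda>t. F (q + t *\<^sub>R x) J) has_real_derivative adjoint (\<lambda>x. f' (x, 0)) 1 \<bullet> x) (at 0)" for x
    using has_real_derivative_along_line[OF f', of "(x, 0)"] adjoint_works[OF lin(1), of x 1]
    by (simp add: inner_commute)
  moreover have "((\<lambda>t. F q (J + t *\<^sub>R X)) has_real_derivative adjoint (\<lambda>X. f' (0, X)) 1 \<bullet> X) (at 0)" for X
    using has_real_derivative_along_line[OF f', of "(0, X)"] adjoint_works[OF lin(2), of X 1]
    by (simp add: inner_commute)
  ultimately show ?thesis using that by blast
qed

lemma nabla1_diagonal:
  assumes "(\<lambda>(q, J). F q J) differentiable (at (q, J))"
  shows "\<exists>g. nabla1 F q J = rdiag g"
  using partial_derivatives_inner[OF assms] nabla1_eqI by metis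

lemma hermitian_d2:
  assumes "(\<lambda>(q, J). F q J) differentiable (at (q, J))"
  shows "hermitian (d2 F q J)"
proof -
  obtain G where G: "\<And>X. ((\<lambda>t. F q (J + t *\<^sub>R X)) has_real_derivative G \<bullet> X) (at 0)"
    using partial_derivatives_inner[OF assms] by metis
  define D where "D = (1/2) *\<^sub>R (G + cadj G)"
  have "hermitian D"
    by (simp add: D_def hermitian_def cadj_add cadj_scaleR add.commute)
  moreover have "ip D X = G \<bullet> X" if "hermitian X" for X
  proof -
    have "ip D X = (ip G X + ip (cadj G) X) / 2"
      by (simp add: D_def ip_scaleR_left ip_commute[of "_ + _"] ip_add_right ip_commute[of X])
    then show ?thesis
      using ip_cadj_left_hermitian[OF that, of G] by (simp add: ip_cadj_left)
  qed
  ultimately have "d2 F q J = D"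
    using G by (intro d2_eqI) auto
  with \<open>hermitian D\<close> show ?thesis by simp
qed

primrec mpow_deriv :: "'n::finite cmat \<Rightarrow> 'n cmat \<Rightarrow> nat \<Rightarrow> 'n cmat" where
  "mpow_deriv J X 0 = 0"
| "mpow_deriv J X (Suc n) = X ** mpow J n + J ** mpow_deriv J X n"

lemma has_vector_derivative_mpow_entry:
  "((\<lambda>t. mpow (J + t *\<^sub>R X) n $ i $ j) has_vector_derivative mpow_deriv J X n $ i $ j) (at 0)"
proof (induction n arbitrary: i j)
  case 0
  then show ?case by simp
next
  case (Suc n)
  have "((\<lambda>t. \<Sum>l\<in>UNIV. (J $ i $ l + t *\<^sub>R X $ i $ l) * mpow (J + t *\<^sub>R X) n $ l $ j)
     has_vector_derivative (\<Sum>l\<in>UNIV. (J $ i $ l + 0 *\<^sub>R X $ i $ l) * mpow_deriv J X n $ l $ j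
        + X $ i $ l * mpow (J + 0 *\<^sub>R X) n $ l $ j)) (at 0)"
    by (intro has_vector_derivative_sum has_vector_derivative_mult Suc.IH)
      (auto intro!: derivative_eq_intros)
  then show ?case
    by (simp add: matrix_matrix_mult_def sum.distrib add.commute)
qed

lemma trace_mult_mpow_deriv:
  "trace (B ** mpow_deriv J X n) = (\<Sum>m<n. trace (B ** mpow J m ** X ** mpow J (n - 1 - m)))"
proof (induction n arbitrary: B)
  case 0
  then show ?case by (simp add: trace_def matrix_matrix_mult_def)
next
  case (Suc n)
  have "trace (B ** mpow_deriv J X (Suc n)) = trace (B ** X ** mpow J n) + trace ((B ** J) ** mpow_deriv J X n)"
    by (simp add: matrix_add_ldistrib trace_add matrix_mul_assoc)
  also have "trace ((B ** J) ** mpow_deriv J X n) =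
      (\<Sum>m<n. trace (B ** mpow J (Suc m) ** X ** mpow J (n - 1 - m)))"
    by (simp add: Suc.IH matrix_mul_assoc)
  finally show ?case
    by (subst sum.lessThan_Suc_shift) (simp add: matrix_mul_rid matrix_mul_assoc)
qed

lemma trace_mpow_deriv: "trace (mpow_deriv J X (Suc k)) = of_nat (Suc k) * trace (mpow J k ** X)"
proof -
  have "trace (mpow J m ** X ** mpow J (k - m)) = trace (mpow J k ** X)" if "m \<le> k" for m
  proof -
    have "mpow J (k - m) ** mpow J m = mpow J k"
      using that by (simp flip: mpow_add)
    have "trace (mpow J m ** X ** mpow J (k - m)) = trace (X ** mpow J (k - m) ** mpow J m)"
      by (rule trace_rotate3)
    also have "\<dots> = trace (X ** mpow J k)"
      by (simp only: flip: matrix_mul_assoc \<open>mpow J (k - m) ** mpow J m = mpow J k\<close>)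
    also have "\<dots> = trace (mpow J k ** X)"
      by (rule trace_mul_sym)
    finally show ?thesis .
  qed
  then have "trace (mat 1 ** mpow_deriv J X (Suc k)) = (\<Sum>m<Suc k. trace (mpow J k ** X))"
    unfolding trace_mult_mpow_deriv by (intro sum.cong) auto
  then show ?thesis by simp
qed

lemma Hk_has_real_derivative:
  "((\<lambda>t. Hk (Suc k) q (J + t *\<^sub>R X)) has_real_derivative ip (mpow J k) X) (at 0)"
proof -
  have "((\<lambda>t. Re (trace (mpow (J + t *\<^sub>R X) (Suc k)))) has_real_derivative
      Re (trace (mpow_deriv J X (Suc k)))) (at 0)"
    unfolding trace_def has_real_derivative_iff_has_vector_derivative
    by (intro bounded_linear.has_vector_derivative[OF bounded_linear_Re]
        has_vector_derivative_sum has_vector_derivative_mpow_entry)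
  then have "((\<lambda>t. Hk (Suc k) q (J + t *\<^sub>R X)) has_real_derivative
      Re (trace (mpow_deriv J X (Suc k))) / real (Suc k)) (at 0)"
    unfolding Hk_def by (rule DERIV_cdivide)
  moreover have "Re (trace (mpow_deriv J X (Suc k))) / real (Suc k) = ip (mpow J k) X"
    unfolding trace_mpow_deriv ip_def by (simp del: of_nat_Suc)
  ultimately show ?thesis by simp
qed

lemma nabla1_Hk: "nabla1 (Hk k) q J = 0"
proof -
  have "nabla1 (Hk k) q J = rdiag 0"
    by (rule nabla1_eqI) (simp add: Hk_def)
  then show ?thesis by (simp add: rdiag_def vec_eq_iff)
qed

lemma d2_Hk: "hermitian J \<Longrightarrow> d2 (Hk (Suc k)) q J = mpow J k"
  by (rule d2_eqI) (auto simp: hermitian_mpow Hk_has_real_derivative)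

lemma br2_Hk:
  assumes "hermitian J"
  shows "br2 F (Hk (Suc k)) q J =
    ip (nabla1 F q J) (mpow J (Suc k)) + 2 * ip (J ** d2 F q J) (Rmat q (mpow J (Suc k)))"
  by (simp add: br2_def nabla2_def nabla1_Hk d2_Hk[OF assms])

lemma br1_Hk:
  assumes "hermitian J"
  shows "br1 F (Hk (Suc k)) q J = ip (nabla1 F q J) (mpow J k) + ip (d2 F q J) (VJ k q J)"
  by (simp add: br1_def VJ_def nabla1_Hk d2_Hk[OF assms] ip_add_right
      ip_comm_commuting[OF mpow_commute] ip_comm_rotate[of J])

lemma ip_VJ:
  assumes "hermitian J" "hermitian D"
  shows "ip D (VJ k q J) = 2 * ip (J ** D) (Rmat q (mpow J k))"
  unfolding VJ_def ip_comm_rotate[of J, symmetric]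
  using assms by (intro ip_comm_antihermitian Rmat_antihermitian hermitian_mpow)

lemma sum_symmetric_eq_twice_sum_less:
  fixes c :: "'n::{finite,linorder} \<Rightarrow> 'n \<Rightarrow> 'a::comm_monoid_add"
  assumes "\<And>i j. c i j = c j i" and "\<And>i. c i i = 0"
  shows "(\<Sum>i\<in>UNIV. \<Sum>j\<in>UNIV. c i j) = (\<Sum>(i, j)\<in>{(i, j). i < j}. c i j) + (\<Sum>(i, j)\<in>{(i, j). i < j}. c i j)"
proof -
  have UNIV_split: "UNIV = {(i, j). i < j} \<union> {(i, j). j < i} \<union> {(i, j::'n). i = j}"
    by auto
  have "(\<Sum>i\<in>UNIV. \<Sum>j\<in>UNIV. c i j) = (\<Sum>(i, j)\<in>UNIV. c i j)"
    by (simp add: sum.cartesian_product)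
  also have "\<dots> = (\<Sum>(i, j)\<in>{(i, j). i < j}. c i j) + (\<Sum>(i, j)\<in>{(i, j). j < i}. c i j)
      + (\<Sum>(i, j)\<in>{(i, j::'n). i = j}. c i j)"
    unfolding UNIV_split by (subst sum.union_disjoint, auto)+
  also have "(\<Sum>(i, j)\<in>{(i, j::'n). i = j}. c i j) = 0"
    by (rule sum.neutral) (auto simp: assms(2))
  also have "(\<Sum>(i, j)\<in>{(i, j). j < i}. c i j) = (\<Sum>(i, j)\<in>{(i, j). i < j}. c i j)"
    by (rule sum.reindex_bij_witness[where i="\<lambda>(i, j). (j, i)" and j="\<lambda>(i, j). (j, i)"])
      (auto intro: assms(1))
  finally show ?thesis by simp
qed

lemma Hk2_Jpar:
  fixes q p :: "real^'n::{finite,linorder}" and \<xi> :: "'n cmat"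
  assumes "antihermitian \<xi>" and diag0: "\<And>i. \<xi> $ i $ i = 0"
  shows "Hk 2 q (Jpar q p \<xi>) = (1/2) * (\<Sum>i\<in>UNIV. (p $ i)\<^sup>2)
    + (\<Sum>(i, j)\<in>{(i, j). i < j}. (cmod (\<xi> $ i $ j))\<^sup>2 / (sinh (q $ i - q $ j))\<^sup>2)"
proof -
  define J where "J = Jpar q p \<xi>"
  define c where "c i j = (cmod (\<xi> $ i $ j))\<^sup>2 / (sinh (q $ i - q $ j))\<^sup>2" for i j
  have \<xi>_swap: "\<xi> $ j $ i = - cnj (\<xi> $ i $ j)" for i j
  proof -
    have "cadj \<xi> $ i $ j = (- \<xi>) $ i $ j"
      using assms(1) unfolding antihermitian_def by simp
    then have "cnj (\<xi> $ j $ i) = - \<xi> $ i $ j"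
      by (simp add: cadj_def)
    then show ?thesis
      by (metis complex_cnj_cnj complex_cnj_minus)
  qed
  have sinh_swap: "sinh (q $ j - q $ i) = - sinh (q $ i - q $ j)" for i j
    using sinh_minus[of "q $ i - q $ j"] by simp
  have entry: "Re (J $ i $ j * J $ j $ i) = (if i = j then (p $ i)\<^sup>2 else 0) + c i j" for i j
  proof (cases "i = j")
    case True
    then show ?thesis by (simp add: J_def Jpar_def c_def diag0 power2_eq_square)
  next
    case False
    then have "J $ i $ j * J $ j $ i = (\<xi> $ i $ j * cnj (\<xi> $ i $ j)) / of_real ((sinh (q $ i - q $ j))\<^sup>2)"
      by (simp add: J_def Jpar_def \<xi>_swap[of i j] sinh_swap[of i j] power2_eq_square)
    with False show ?thesis
      by (simp add: c_def Re_divide_of_real complex_norm_square[symmetric])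
  qed
  have c_sym: "c i j = c j i" for i j
    by (simp add: c_def \<xi>_swap[of i j] sinh_swap[of i j])
  have c_diag: "c i i = 0" for i
    by (simp add: c_def diag0)
  have "mpow J 2 = J ** J"
    by (simp add: numeral_2_eq_2 matrix_mul_rid)
  then have "Re (trace (mpow J 2)) = (\<Sum>i\<in>UNIV. \<Sum>j\<in>UNIV. Re (J $ i $ j * J $ j $ i))"
    by (simp add: trace_def matrix_matrix_mult_def)
  also have "\<dots> = (\<Sum>i\<in>UNIV. (p $ i)\<^sup>2) + (\<Sum>i\<in>UNIV. \<Sum>j\<in>UNIV. c i j)"
    unfolding entry by (simp add: sum.distrib)
  also have "(\<Sum>i\<in>UNIV. \<Sum>j\<in>UNIV. c i j) = 2 * (\<Sum>(i, j)\<in>{(i, j). i < j}. c i j)"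
    using sum_symmetric_eq_twice_sum_less[of c, OF c_sym c_diag] by (simp only: mult_2)
  finally show ?thesis
    unfolding J_def[symmetric] Hk_def c_def by simp
qed

theorem corollary4p5:
  fixes F :: "(real, 'n::{finite,linorder}) vec \<Rightarrow> 'n cmat \<Rightarrow> real"
  assumes smooth: "Cinf_on Mamb (\<lambda>(q, J). F q J)"
    and inv: "torus_invariant F"
  shows "(\<forall>k q J. 1 \<le> k \<and> (q, J) \<in> Mreg \<longrightarrow>
            br2 F (Hk k) q J = br1 F (Hk (k + 1)) q J \<and>
            br1 F (Hk (k + 1)) q J = ip (nabla1 F q J) (Vq k J) + ip (d2 F q J) (VJ k q J))
       \<and> (\<forall>(q::(real,'n) vec) p \<xi>. regular q \<and> antihermitian \<xi> \<and> (\<forall>i. \<xi> $ i $ i = 0) \<longrightarrow>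
            Hk 2 q (Jpar q p \<xi>) =
              (1/2) * (\<Sum>i\<in>UNIV. (p $ i)\<^sup>2)
              + (\<Sum>(i, j)\<in>{(i, j). i < j}. (cmod (\<xi> $ i $ j))\<^sup>2 / (sinh (q $ i - q $ j))\<^sup>2))
       \<and> (\<forall>k (q::(real,'n) vec) J. 1 \<le> k \<and> (q, J) \<in> Mreg \<longrightarrow> Im (trace (mpow J k)) / real k = 0)"
proof (intro conjI allI impI)
  txt \<open>The identities hold pointwise for every differentiable F; torus invariance is only
    needed for the reduced brackets to be Poisson brackets.\<close>
  fix k :: nat and q J assume kqJ: "1 \<le> k \<and> (q, J) \<in> (Mreg :: ((real, 'n) vec \<times> 'n cmat) set)"
  then obtain m where k: "k = Suc m" by (cases k) auto
  have J: "hermitian J" using kqJ by (simp add: Mreg_def)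
  have "Ck_on 1 Mamb (\<lambda>(q, J). F q J)" and "(q, J) \<in> Mamb"
    using smooth kqJ by (auto simp: Cinf_on_def Mreg_def Mamb_def)
  then have diff: "(\<lambda>(q, J). F q J) differentiable (at (q, J))" by simp
  obtain g where g: "nabla1 F q J = rdiag g" using nabla1_diagonal[OF diff] by blast
  have D: "hermitian (d2 F q J)" using hermitian_d2[OF diff] .
  show "br2 F (Hk k) q J = br1 F (Hk (k + 1)) q J"
    unfolding k by (simp add: br2_Hk br1_Hk J ip_VJ[OF J D])
  show "br1 F (Hk (k + 1)) q J = ip (nabla1 F q J) (Vq k J) + ip (d2 F q J) (VJ k q J)"
    by (simp add: br1_Hk J g ip_rdiag_Vq)
next
  fix q p :: "(real, 'n) vec" and \<xi> :: "'n cmat"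
  assume "regular q \<and> antihermitian \<xi> \<and> (\<forall>i. \<xi> $ i $ i = 0)"
  then show "Hk 2 q (Jpar q p \<xi>) = (1/2) * (\<Sum>i\<in>UNIV. (p $ i)\<^sup>2)
      + (\<Sum>(i, j)\<in>{(i, j). i < j}. (cmod (\<xi> $ i $ j))\<^sup>2 / (sinh (q $ i - q $ j))\<^sup>2)"
    by (simp add: Hk2_Jpar)
next
  fix k :: nat and q :: "(real, 'n) vec" and J
  assume "1 \<le> k \<and> (q, J) \<in> (Mreg :: ((real, 'n) vec \<times> 'n cmat) set)"
  then show "Im (trace (mpow J k)) / real k = 0"
    by (simp add: Mreg_def Im_trace_hermitian hermitian_mpow)
qed

end
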